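(* Assume the vector variational inequality defined by $F$ and $K$ is monotone and $K$ is polyhedral convex (an intersection of finitely many closed half-spaces of $\mathbb{R}^n$). (a) If the Pareto solution set $\mathrm{Sol}(F,K)$ is disconnected, then each connected component of $\mathrm{Sol}(F,K)$ is unbounded. (b) If $\mathrm{Sol}(F,K)$ is bounded and nonempty, then it is connected.
   Context: Let $K\subset\mathbb{R}^n$ be a nonempty closed convex set and $F_1,\dots,F_m:K\to\mathbb{R}^n$ continuous functions; write $F=(F_1,\dots,F_m)$ and $F(x)(u)=(\langle F_1(x),u\rangle,\dots,\langle F_m(x),u\rangle)$. The problem is monotone if each $F_l$ is monotone on $K$: $\langle F_l(y)-F_l(x),y-x\rangle\ge0$ for all $x,y\in K$. The Pareto solution set $\mathrm{Sol}(F,K)$ is the set of $x\in K$ such that $F(x)(x-y)\notin\mathbb{R}^m_+\setminus\{0\}$ for all $y\in K$. *)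

theory Defs
  imports "HOL-Analysis.Analysis"
begin

definition monotone_map_on :: "'a::real_inner set \<Rightarrow> ('a \<Rightarrow> 'a) \<Rightarrow> bool" where
  "monotone_map_on K G \<longleftrightarrow> (\<forall>x\<in>K. \<forall>y\<in>K. (G y - G x) \<bullet> (y - x) \<ge> 0)"

text \<open>The components are indexed by the finite type 'm (so m = CARD('m) >= 1).
  F(x)(x-y) lies in R^m_+ minus {0} iff all components are >= 0 and some is > 0.\<close>
definition pareto_sol :: "('m::finite \<Rightarrow> 'a::real_inner \<Rightarrow> 'a) \<Rightarrow> 'a set \<Rightarrow> 'a set" where
  "pareto_sol F K = {x \<in> K. \<forall>y\<in>K.
      \<not> ((\<forall>l. F l x \<bullet> (x - y) \<ge> 0) \<and> (\<exists>l. F l x \<bullet> (x - y) > 0))}"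

end

theory Submission
  imports Defs
begin

text \<open>For polyhedral \<open>K\<close> the Pareto solutions are exactly the solutions of the scalarized
  variational inequalities \<open>VI(\<Sum>\<^sub>l \<xi>\<^sub>l F\<^sub>l, K)\<close> with strictly positive weights \<open>\<xi>\<close>: one direction
  is immediate, the other is a theorem of the alternative for the cone of active constraint
  normals. Each scalarized problem is monotone, so its solution set is convex. Given Pareto
  solutions \<open>x\<^sub>0, x\<^sub>1\<close> with weights \<open>\<xi>\<^sub>0, \<xi>\<^sub>1\<close>, follow the solution sets \<open>S(t)\<close> along the segment
  \<open>(1 - t) \<xi>\<^sub>0 + t \<xi>\<^sub>1\<close>. This family has closed graph and is upper hemicontinuous wherever it is
  bounded and nonempty (truncation plus Hartman--Stampacchia). Hence, if the component \<open>C\<close> of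
  \<open>x\<^sub>0\<close> is bounded, the parameters \<open>t\<close> with \<open>\<emptyset> \<noteq> S(t) \<subseteq> C\<close> form a clopen subset of \<open>[0, 1]\<close>,
  so \<open>x\<^sub>1 \<in> C\<close>. A bounded component therefore is the whole solution set, which gives (a) and (b).\<close>

section \<open>Variational inequalities\<close>

definition vi_sol :: "'a::real_inner set \<Rightarrow> ('a \<Rightarrow> 'a) \<Rightarrow> 'a set" where
  "vi_sol K G = {x\<in>K. \<forall>y\<in>K. G x \<bullet> (y - x) \<ge> 0}"

lemma vi_sol_subset: "vi_sol K G \<subseteq> K"
  by (auto simp: vi_sol_def)

lemma monotone_map_on_subset: "monotone_map_on K G \<Longrightarrow> D \<subseteq> K \<Longrightarrow> monotone_map_on D G"
  by (auto simp: monotone_map_on_def)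

text \<open>Minty's lemma: the dual form exhibits the solution set as an intersection of half-spaces.\<close>
lemma vi_sol_eq_minty:
  fixes G :: "'a::real_inner \<Rightarrow> 'a"
  assumes K: "convex K" and cont: "continuous_on K G" and mono: "monotone_map_on K G"
  shows "vi_sol K G = {x\<in>K. \<forall>y\<in>K. G y \<bullet> (y - x) \<ge> 0}"
proof (intro equalityI subsetI)
  fix x assume "x \<in> vi_sol K G"
  then show "x \<in> {x\<in>K. \<forall>y\<in>K. G y \<bullet> (y - x) \<ge> 0}"
    using mono by (force simp: vi_sol_def monotone_map_on_def inner_diff_left)
next
  fix x assume "x \<in> {x\<in>K. \<forall>y\<in>K. G y \<bullet> (y - x) \<ge> 0}"
  then have x: "x \<in> K" and dual: "\<And>y. y \<in> K \<Longrightarrow> G y \<bullet> (y - x) \<ge> 0" by auto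
  have "G x \<bullet> (y - x) \<ge> 0" if y: "y \<in> K" for y
  proof -
    define z where "z t = x + t *\<^sub>R (y - x)" for t :: real
    have zK: "z t \<in> K" if "0 \<le> t" "t \<le> 1" for t
      using convexD_alt[OF K x y that] by (simp add: z_def algebra_simps)
    have "((\<lambda>t. G (z t) \<bullet> (y - x)) \<longlongrightarrow> G (z 0) \<bullet> (y - x)) (at_right 0)"
    proof (intro tendsto_intros continuous_on_tendsto_compose[OF cont])
      show "(z \<longlongrightarrow> z 0) (at_right 0)" unfolding z_def by (intro tendsto_intros)
      show "\<forall>\<^sub>F t in at_right 0. z t \<in> K"
        using eventually_at_right_real[OF zero_less_one] by eventually_elim (auto intro: zK)
    qed (use x in \<open>simp add: z_def\<close>)
    moreover have "\<forall>\<^sub>F t in at_right 0. G (z t) \<bullet> (y - x) \<ge> 0"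
      using eventually_at_right_real[OF zero_less_one]
    proof eventually_elim
      case (elim t)
      then have "t * (G (z t) \<bullet> (y - x)) \<ge> 0"
        using dual[OF zK] by (simp add: z_def)
      then show ?case using elim by (simp add: zero_le_mult_iff)
    qed
    ultimately show ?thesis by (simp add: z_def tendsto_lowerbound)
  qed
  then show "x \<in> vi_sol K G" using x by (simp add: vi_sol_def)
qed

lemma convex_vi_sol:
  fixes G :: "'a::real_inner \<Rightarrow> 'a"
  assumes "convex K" "continuous_on K G" "monotone_map_on K G"
  shows "convex (vi_sol K G)"
proof -
  have "vi_sol K G = K \<inter> (\<Inter>y\<in>K. {x. G y \<bullet> x \<le> G y \<bullet> y})"
    by (auto simp: vi_sol_eq_minty[OF assms] inner_diff_right)
  then show ?thesis
    using assms(1) by (simp add: convex_Int convex_INT convex_halfspace_le)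
qed

text \<open>Hartman--Stampacchia: a Brouwer fixed point of \<open>x \<mapsto> proj\<^sub>D (x - G x)\<close> solves the inequality.\<close>
lemma vi_sol_nonempty:
  fixes G :: "'a::euclidean_space \<Rightarrow> 'a"
  assumes D: "compact D" "convex D" "D \<noteq> {}" and cont: "continuous_on D G"
  shows "vi_sol D G \<noteq> {}"
proof -
  have cl: "closed D" using D(1) by (rule compact_imp_closed)
  define f where "f x = closest_point D (x - G x)" for x
  have "continuous_on D f"
    unfolding f_def
    by (intro continuous_on_compose2[OF continuous_on_closest_point[OF D(2) cl D(3)]]
        continuous_intros cont) auto
  moreover have "f \<in> D \<rightarrow> D" using closest_point_in_set[OF cl D(3)] by (auto simp: f_def)
  ultimately obtain x where x: "x \<in> D" "f x = x" using brouwer[OF D] by blast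
  have "G x \<bullet> (y - x) \<ge> 0" if "y \<in> D" for y
    using closest_point_dot[OF D(2) cl that, of "x - G x"] x(2)
    by (simp add: f_def inner_diff_left)
  then show ?thesis using x(1) by (auto simp: vi_sol_def)
qed

lemma vi_sol_truncate_iff:
  fixes G :: "'a::real_inner \<Rightarrow> 'a"
  assumes K: "convex K" and x: "norm x < r"
  shows "x \<in> vi_sol (K \<inter> cball 0 r) G \<longleftrightarrow> x \<in> vi_sol K G"
proof
  assume xD: "x \<in> vi_sol (K \<inter> cball 0 r) G"
  then have xK: "x \<in> K" by (simp add: vi_sol_def)
  have "G x \<bullet> (y - x) \<ge> 0" if y: "y \<in> K" for y
  proof -
    have "((\<lambda>t. norm (x + t *\<^sub>R (y - x))) \<longlongrightarrow> norm (x + 0 *\<^sub>R (y - x))) (at_right 0)"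
      by (intro tendsto_intros)
    then have "\<forall>\<^sub>F t in at_right 0. norm (x + t *\<^sub>R (y - x)) < r"
      using x by (intro order_tendstoD(2)) auto
    moreover note eventually_at_right_real[OF zero_less_one]
    ultimately obtain t where t: "0 < t" "t < 1" "norm (x + t *\<^sub>R (y - x)) < r"
      by (metis (mono_tags) eventually_conj eventually_happens' greaterThanLessThan_iff
          trivial_limit_at_right_real)
    have "x + t *\<^sub>R (y - x) \<in> K \<inter> cball 0 r"
      using convexD_alt[OF K xK y, of t] t by (simp add: algebra_simps)
    then have "G x \<bullet> ((x + t *\<^sub>R (y - x)) - x) \<ge> 0"
      using xD unfolding vi_sol_def by blast
    then show ?thesis using t(1) by (simp add: zero_le_mult_iff)
  qed
  then show "x \<in> vi_sol K G" using xK by (simp add: vi_sol_def)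
next
  assume "x \<in> vi_sol K G"
  then show "x \<in> vi_sol (K \<inter> cball 0 r) G" using x by (auto simp: vi_sol_def)
qed

lemma connected_subset_ball:
  fixes S :: "'a::real_normed_vector set"
  assumes "connected S" "S \<inter> ball a r \<noteq> {}" "S \<inter> sphere a r = {}"
  shows "S \<subseteq> ball a r"
proof -
  have "r > 0" using assms(2) by (auto intro: le_less_trans[OF zero_le_dist])
  then show ?thesis using connected_Int_frontier[OF assms(1,2)] assms(3) by auto
qed

text \<open>A convex solution set cannot leave a ball without meeting its sphere, where truncated and
  untruncated solutions agree.\<close>
lemma vi_sol_truncate_eq:
  fixes G :: "'a::real_inner \<Rightarrow> 'a"
  assumes K: "convex K" "continuous_on K G" "monotone_map_on K G"
    and "c < r" and ne: "vi_sol (K \<inter> cball 0 r) G \<noteq> {}"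
    and bdd: "vi_sol (K \<inter> cball 0 r) G \<subseteq> ball 0 c"
  shows "vi_sol K G = vi_sol (K \<inter> cball 0 r) G"
proof -
  have trunc: "x \<in> vi_sol (K \<inter> cball 0 r) G \<longleftrightarrow> x \<in> vi_sol K G" if "norm x < c" for x
    using vi_sol_truncate_iff[OF K(1)] that \<open>c < r\<close> by simp
  have "vi_sol K G \<subseteq> ball 0 c"
  proof (rule connected_subset_ball)
    show "connected (vi_sol K G)" by (intro convex_connected convex_vi_sol K)
    show "vi_sol K G \<inter> ball 0 c \<noteq> {}" using ne bdd trunc by fastforce
    show "vi_sol K G \<inter> sphere 0 c = {}" using bdd trunc \<open>c < r\<close>
      by (force simp: vi_sol_truncate_iff[OF K(1), symmetric])
  qed
  then show ?thesis using bdd trunc by (auto simp: subset_iff)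
qed

lemma vi_sol_truncate_subset_ball:
  fixes G :: "'a::real_inner \<Rightarrow> 'a"
  assumes K: "convex K" "continuous_on K G" "monotone_map_on K G"
    and "c < r" and ne: "vi_sol K G \<noteq> {}" and bdd: "vi_sol K G \<subseteq> ball 0 c"
  shows "vi_sol (K \<inter> cball 0 r) G \<subseteq> ball 0 c"
proof (rule connected_subset_ball)
  have "convex (K \<inter> cball 0 r)" using K(1) by (simp add: convex_Int)
  then show "connected (vi_sol (K \<inter> cball 0 r) G)"
    using K by (intro convex_connected convex_vi_sol continuous_on_subset[OF K(2)]
        monotone_map_on_subset[OF K(3)]) auto
  obtain x where "x \<in> vi_sol K G" using ne by blast
  moreover have "norm x < c" using calculation bdd by auto
  ultimately show "vi_sol (K \<inter> cball 0 r) G \<inter> ball 0 c \<noteq> {}"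
    using vi_sol_truncate_iff[OF K(1), of x r G] \<open>c < r\<close> by auto
  show "vi_sol (K \<inter> cball 0 r) G \<inter> sphere 0 c = {}"
    using bdd vi_sol_truncate_iff[OF K(1)] \<open>c < r\<close> by force
qed

lemma closedin_vi_sol_graph:
  fixes G :: "'b::topological_space \<Rightarrow> 'a::real_inner \<Rightarrow> 'a"
  assumes cont: "continuous_on (I \<times> K) (\<lambda>(t, x). G t x)"
  shows "closedin (top_of_set (I \<times> K)) (Sigma I (\<lambda>t. vi_sol K (G t)))"
proof (cases "K = {}")
  case False
  define H where "H y p = G (fst p) (snd p) \<bullet> (y - snd p)" for y and p :: "'b \<times> 'a"
  have "continuous_on (I \<times> K) (H y)" for y
    unfolding H_def using cont by (intro continuous_intros) (simp add: case_prod_beta)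
  then have "closedin (top_of_set (I \<times> K)) (\<Inter>y\<in>K. (I \<times> K) \<inter> H y -` {0..})"
    using False by (intro closedin_INT continuous_closedin_preimage) auto
  moreover have "(\<Inter>y\<in>K. (I \<times> K) \<inter> H y -` {0..}) = Sigma I (\<lambda>t. vi_sol K (G t))"
    using False by (auto simp: vi_sol_def H_def)
  ultimately show ?thesis by simp
qed (simp add: vi_sol_def)

lemma vi_sol_upper_hemicontinuous_compact:
  fixes G :: "'b::euclidean_space \<Rightarrow> 'a::euclidean_space \<Rightarrow> 'a"
  assumes D: "compact D" and cont: "continuous_on (I \<times> D) (\<lambda>(t, x). G t x)" and U: "open U"
  shows "openin (top_of_set I) {t\<in>I. vi_sol D (G t) \<subseteq> U}"
proof -
  define B where "B = Sigma I (\<lambda>t. vi_sol D (G t)) \<inter> ((I \<times> D) \<inter> (UNIV \<times> - U))"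
  have "closedin (top_of_set (I \<times> D)) ((I \<times> D) \<inter> (UNIV \<times> - U))"
    using U by (intro closedin_closed_Int closed_Times closed_UNIV) (simp add: closed_Compl)
  then have "closedin (top_of_set (I \<times> D)) B"
    unfolding B_def by (rule closedin_Int[OF closedin_vi_sol_graph[OF cont]])
  then have "closedin (top_of_set I) (fst ` B)" by (rule Starlike.closed_map_fst[OF D])
  moreover have "{t\<in>I. vi_sol D (G t) \<subseteq> U} = I - fst ` B"
  proof (intro equalityI subsetI)
    fix t assume "t \<in> I - fst ` B"
    then have "t \<in> I" "\<And>x. x \<in> vi_sol D (G t) \<Longrightarrow> x \<notin> U \<Longrightarrow> False"
      using vi_sol_subset unfolding B_def by (blast, force)
    then show "t \<in> {t\<in>I. vi_sol D (G t) \<subseteq> U}" by blast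
  qed (auto simp: B_def)
  ultimately show ?thesis by (simp add: openin_diff)
qed

text \<open>Near \<open>t\<^sub>0\<close> the solution sets over \<open>K\<close> and over a large compact truncation coincide, and on the
  truncation the closed graph gives upper hemicontinuity.\<close>
lemma vi_sol_upper_hemicontinuous_at:
  fixes G :: "'b::euclidean_space \<Rightarrow> 'a::euclidean_space \<Rightarrow> 'a"
  assumes K: "closed K" "convex K"
    and cont: "continuous_on (I \<times> K) (\<lambda>(t, x). G t x)"
    and mono: "\<And>t. t \<in> I \<Longrightarrow> monotone_map_on K (G t)"
    and t0: "t0 \<in> I" "vi_sol K (G t0) \<noteq> {}" "bounded (vi_sol K (G t0))"
    and U: "open U" "vi_sol K (G t0) \<subseteq> U"
  shows "\<exists>V. openin (top_of_set I) V \<and> t0 \<in> V \<and>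
           (\<forall>t\<in>V. vi_sol K (G t) \<noteq> {} \<and> vi_sol K (G t) \<subseteq> U)"
proof -
  have contK: "continuous_on K (G t)" if "t \<in> I" for t
  proof -
    have "continuous_on K (\<lambda>x. (\<lambda>(t, x). G t x) (t, x))"
      using that by (intro continuous_on_compose2[OF cont] continuous_intros) auto
    then show ?thesis by simp
  qed
  obtain \<rho> where \<rho>: "vi_sol K (G t0) \<subseteq> ball 0 \<rho>"
    using bounded_subset_ballD[OF t0(3)] by blast
  define D where "D = K \<inter> cball 0 (\<rho> + 1)"
  have D: "compact D" "convex D" "D \<subseteq> K"
    using K by (auto simp: D_def closed_Int_compact convex_Int)
  have "vi_sol D (G t0) \<subseteq> ball 0 \<rho>"
    unfolding D_def using K(2) contK mono t0 \<rho> by (intro vi_sol_truncate_subset_ball) auto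
  then have t0D: "vi_sol D (G t0) \<subseteq> U \<inter> ball 0 \<rho>"
    using U(2) vi_sol_truncate_iff[OF K(2), of _ "\<rho> + 1"] by (force simp: D_def)
  define V where "V = {t\<in>I. vi_sol D (G t) \<subseteq> U \<inter> ball 0 \<rho>}"
  have "openin (top_of_set I) V"
    unfolding V_def using D U(1)
    by (intro vi_sol_upper_hemicontinuous_compact continuous_on_subset[OF cont] open_Int) auto
  moreover have "t0 \<in> V" using t0(1) t0D by (simp add: V_def)
  moreover have "vi_sol K (G t) \<noteq> {} \<and> vi_sol K (G t) \<subseteq> U" if t: "t \<in> V" for t
  proof -
    have "D \<noteq> {}" using t0(2) \<rho> by (force simp: D_def vi_sol_def)
    then have ne: "vi_sol D (G t) \<noteq> {}"
      using t D contK by (intro vi_sol_nonempty continuous_on_subset[OF contK]) (auto simp: V_def)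
    have "vi_sol K (G t) = vi_sol D (G t)"
      unfolding D_def using K(2) contK mono t ne by (intro vi_sol_truncate_eq) (auto simp: V_def D_def)
    then show ?thesis using t ne by (auto simp: V_def)
  qed
  ultimately show ?thesis by blast
qed

section \<open>Connected unions of upper hemicontinuous families\<close>

lemma connected_UN_upper_hemicontinuous:
  assumes X: "connected X"
    and ne: "\<And>t. t \<in> X \<Longrightarrow> \<Phi> t \<noteq> {}" and conn: "\<And>t. t \<in> X \<Longrightarrow> connected (\<Phi> t)"
    and usc: "\<And>U. open U \<Longrightarrow> openin (top_of_set X) {t\<in>X. \<Phi> t \<subseteq> U}"
  shows "connected (\<Union>t\<in>X. \<Phi> t)"
  unfolding connected_def
proof (intro notI, elim exE conjE)
  fix A B assume A: "open A" and B: "open B" and cover: "(\<Union>t\<in>X. \<Phi> t) \<subseteq> A \<union> B"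
    and disj: "A \<inter> B \<inter> (\<Union>t\<in>X. \<Phi> t) = {}"
    and A_ne: "A \<inter> (\<Union>t\<in>X. \<Phi> t) \<noteq> {}" and B_ne: "B \<inter> (\<Union>t\<in>X. \<Phi> t) \<noteq> {}"
  have split: "\<Phi> t \<subseteq> A \<or> \<Phi> t \<subseteq> B" if "t \<in> X" for t
    using connectedD[OF conn[OF that] A B] cover disj that by blast
  have "X \<subseteq> {t\<in>X. \<Phi> t \<subseteq> A} \<union> {t\<in>X. \<Phi> t \<subseteq> B}" using split by blast
  moreover have "{t\<in>X. \<Phi> t \<subseteq> A} \<inter> {t\<in>X. \<Phi> t \<subseteq> B} = {}" using ne disj by blast
  moreover have "{t\<in>X. \<Phi> t \<subseteq> A} \<noteq> {}" "{t\<in>X. \<Phi> t \<subseteq> B} \<noteq> {}"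
    using A_ne B_ne split disj by blast+
  ultimately show False
    using X usc[OF A] usc[OF B] unfolding connected_openin by blast
qed

lemma connected_subset_connected_component:
  assumes "connected S" "S \<subseteq> T" "z \<in> S" "z \<in> connected_component_set T x"
  shows "S \<subseteq> connected_component_set T x"
  using connected_component_maximal[OF assms(3,1,2)] connected_component_eq[OF assms(4)] by simp

context
  fixes S :: "real \<Rightarrow> 'a::euclidean_space set" and T :: "'a set"
  assumes family_subset: "\<And>t. t \<in> {0..1} \<Longrightarrow> S t \<subseteq> T"
    and family_connected: "\<And>t. t \<in> {0..1} \<Longrightarrow> connected (S t)"
    and family_graph_closed: "closed (Sigma {0..1} S)"
    and family_usc: "\<And>t U. t \<in> {0..1} \<Longrightarrow> S t \<noteq> {} \<Longrightarrow> bounded (S t) \<Longrightarrow> open U \<Longrightarrow>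
      S t \<subseteq> U \<Longrightarrow> \<exists>V. openin (top_of_set {0..1}) V \<and> t \<in> V \<and> (\<forall>s\<in>V. S s \<noteq> {} \<and> S s \<subseteq> U)"
begin

lemma connected_UN_family:
  assumes X: "X \<subseteq> {0..1}" "connected X" and bdd: "\<And>s. s \<in> X \<Longrightarrow> S s \<noteq> {} \<and> bounded (S s)"
  shows "connected (\<Union>s\<in>X. S s)"
proof (rule connected_UN_upper_hemicontinuous[OF X(2)])
  fix U :: "'a set" assume U: "open U"
  show "openin (top_of_set X) {s\<in>X. S s \<subseteq> U}"
  proof (subst openin_subopen, intro ballI)
    fix s assume s: "s \<in> {s\<in>X. S s \<subseteq> U}"
    then obtain V where V: "openin (top_of_set {0..1}) V" "s \<in> V" "\<forall>s'\<in>V. S s' \<subseteq> U"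
      using family_usc[of s U] bdd U X(1) by blast
    then obtain W where "open W" "V = {0..1} \<inter> W" by (auto simp: openin_open)
    then show "\<exists>W. openin (top_of_set X) W \<and> s \<in> W \<and> W \<subseteq> {s\<in>X. S s \<subseteq> U}"
      using V s X(1) by (intro exI[of _ "X \<inter> W"]) auto
  qed
qed (use bdd family_connected X(1) in auto)

lemma openin_parameters_absorbed:
  assumes C: "bounded (connected_component_set T x)"
  shows "openin (top_of_set {0..1}) {t\<in>{0..1}. S t \<noteq> {} \<and> S t \<subseteq> connected_component_set T x}"
    (is "openin _ ?A")
  unfolding openin_euclidean_subtopology_iff
proof (intro conjI ballI)
  fix t0 assume "t0 \<in> ?A"
  then have t0: "t0 \<in> {0..1}" "S t0 \<noteq> {}" "S t0 \<subseteq> connected_component_set T x" by auto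
  obtain \<rho> where \<rho>: "connected_component_set T x \<subseteq> ball 0 \<rho>"
    using bounded_subset_ballD[OF C] by blast
  obtain V where V: "openin (top_of_set {0..1}) V" "t0 \<in> V"
    "\<forall>s\<in>V. S s \<noteq> {} \<and> S s \<subseteq> ball 0 \<rho>"
    using family_usc[OF t0(1,2)] t0(3) \<rho> bounded_subset[OF C] by (meson open_ball order_trans)
  then obtain e where e: "e > 0" "\<forall>t\<in>{0..1}. dist t t0 < e \<longrightarrow> t \<in> V"
    by (auto simp: openin_euclidean_subtopology_iff)
  have "t \<in> ?A" if t: "t \<in> {0..1}" "dist t t0 < e" for t
  proof -
    define X where "X = {min t0 t..max t0 t}"
    have "X \<subseteq> V"
    proof
      fix s assume "s \<in> X"
      then have "s \<in> {0..1}" "dist s t0 < e" using t t0(1) by (auto simp: X_def dist_real_def)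
      then show "s \<in> V" using e(2) by blast
    qed
    have "X \<subseteq> {0..1}" using t t0(1) by (auto simp: X_def)
    moreover have "S s \<noteq> {} \<and> bounded (S s)" if "s \<in> X" for s
      using that \<open>X \<subseteq> V\<close> V(3) bounded_subset[OF bounded_ball] by blast
    ultimately have "connected (\<Union>s\<in>X. S s)"
      by (intro connected_UN_family) (auto simp: X_def)
    moreover have "(\<Union>s\<in>X. S s) \<subseteq> T" using family_subset \<open>X \<subseteq> {0..1}\<close> by blast
    moreover obtain z where "z \<in> S t0" using t0(2) by blast
    moreover have "t0 \<in> X" by (simp add: X_def)
    ultimately have "(\<Union>s\<in>X. S s) \<subseteq> connected_component_set T x"
      using t0(3) by (intro connected_subset_connected_component[of _ _ z]) auto
    moreover have "t \<in> X" by (simp add: X_def)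
    ultimately show ?thesis using t(1) \<open>X \<subseteq> V\<close> V(3) by auto
  qed
  then show "\<exists>e>0. \<forall>t\<in>{0..1}. dist t t0 < e \<longrightarrow> t \<in> ?A" using e(1) by blast
qed auto

lemma closed_parameters_absorbed:
  assumes C: "bounded (connected_component_set T x)"
  shows "closed {t\<in>{0..1}. S t \<noteq> {} \<and> S t \<subseteq> connected_component_set T x}"
    (is "closed ?A")
  unfolding closed_sequential_limits
proof (intro allI impI, elim conjE)
  fix f t assume f: "\<forall>n. f n \<in> ?A" "f \<longlonglongrightarrow> t"
  have f01: "f n \<in> {0..1}" for n using f(1) by blast
  then have t: "t \<in> {0..1}" by (rule closed_sequentially[OF closed_atLeastAtMost _ f(2)])
  have "\<forall>n. \<exists>z. z \<in> S (f n)" using f(1) by blast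
  then obtain xs where xs: "\<And>n. xs n \<in> S (f n)" using choice[of "\<lambda>n z. z \<in> S (f n)"] by blast
  have xsC: "xs n \<in> connected_component_set T x" for n using xs f(1) by blast
  then obtain l r where r: "strict_mono r" "(xs \<circ> r) \<longlonglongrightarrow> l"
    using bounded_imp_convergent_subsequence[OF bounded_subset[OF C]] by blast
  have "(\<lambda>n. f (r n)) \<longlonglongrightarrow> t" "(\<lambda>n. xs (r n)) \<longlonglongrightarrow> l"
    using LIMSEQ_subseq_LIMSEQ[OF f(2) r(1)] r(2) by (simp_all add: o_def)
  then have lim: "(\<lambda>n. (f (r n), xs (r n))) \<longlonglongrightarrow> (t, l)" by (rule tendsto_Pair)
  have "(f (r n), xs (r n)) \<in> Sigma {0..1} S" for n using f01 xs by (simp add: SigmaI)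
  then have "(t, l) \<in> Sigma {0..1} S" by (rule closed_sequentially[OF family_graph_closed _ lim])
  then have l: "l \<in> S t" by simp
  obtain W where W: "closed W" "connected_component_set T x = T \<inter> W"
    using closedin_connected_component[of T x] by (auto simp: closedin_closed)
  have "(xs \<circ> r) n \<in> W" for n using xsC W(2) by auto
  then have "l \<in> W" by (rule closed_sequentially[OF W(1) _ r(2)])
  then have "l \<in> connected_component_set T x" using l family_subset[OF t] W(2) by blast
  then show "t \<in> ?A"
    using connected_subset_connected_component[OF family_connected[OF t] family_subset[OF t] l] l t
    by auto
qed

lemma family_subset_bounded_component:
  assumes C: "bounded (connected_component_set T x)" and x: "x \<in> S 0"
  shows "S 1 \<subseteq> connected_component_set T x"
proof -
  let ?A = "{t\<in>{0..1}. S t \<noteq> {} \<and> S t \<subseteq> connected_component_set T x}"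
  have "S 0 \<subseteq> connected_component_set T x"
    using x family_subset[of 0] family_connected[of 0]
    by (intro connected_subset_connected_component[of _ _ x]) auto
  then have "0 \<in> ?A" using x by auto
  moreover have "closedin (top_of_set {0..1}) ?A"
    using closed_parameters_absorbed[OF C] by (intro closed_subset) auto
  ultimately have "?A = {0..1}"
    using connected_clopen[THEN iffD1, rule_format, OF connected_Icc,
        OF conjI[OF openin_parameters_absorbed[OF C]]] by blast
  then have "1 \<in> ?A" by simp
  then show ?thesis by simp
qed

end

section \<open>Scalarization on polyhedra\<close>

lemma polyhedron_as_inequalities:
  assumes "polyhedron K"
  obtains H and a :: "'a set \<Rightarrow> 'a::euclidean_space" and b
  where "finite H" "K = {x. \<forall>h\<in>H. a h \<bullet> x \<le> b h}"
proof -
  obtain H where H: "finite H" "K = \<Inter> H" "\<forall>h\<in>H. \<exists>a b. a \<noteq> 0 \<and> h = {x. a \<bullet> x \<le> b}"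
    using assms unfolding polyhedron_def by blast
  have "\<forall>h\<in>H. \<exists>p. h = {x. fst p \<bullet> x \<le> snd p}" using H(3) by fastforce
  then have "\<exists>p. \<forall>h\<in>H. h = {x. fst (p h) \<bullet> x \<le> snd (p h)}" by (rule bchoice)
  then obtain p where p: "\<forall>h\<in>H. h = {x. fst (p h) \<bullet> x \<le> snd (p h)}" by blast
  have mem: "x \<in> h \<longleftrightarrow> fst (p h) \<bullet> x \<le> snd (p h)" if "h \<in> H" for h x
    by (subst p[rule_format, OF that]) simp
  have "K = {x. \<forall>h\<in>H. fst (p h) \<bullet> x \<le> snd (p h)}" by (auto simp: H(2) mem)
  then show ?thesis by (rule that[OF H(1)])
qed

lemma polyhedron_feasible_direction:
  fixes a :: "'i \<Rightarrow> 'a::real_inner"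
  assumes "finite I" and x: "\<forall>i\<in>I. a i \<bullet> x \<le> b i"
    and active: "\<And>i. i \<in> I \<Longrightarrow> a i \<bullet> x = b i \<Longrightarrow> a i \<bullet> d \<le> 0"
  shows "\<exists>t>0. \<forall>i\<in>I. a i \<bullet> (x + t *\<^sub>R d) \<le> b i"
proof -
  have "\<forall>\<^sub>F t in at_right 0. a i \<bullet> (x + t *\<^sub>R d) \<le> b i" if i: "i \<in> I" for i
  proof (cases "a i \<bullet> x = b i")
    case True
    show ?thesis using eventually_at_right_less
    proof eventually_elim
      case (elim t)
      then show ?case using True active[OF i True] by (simp add: inner_add_right mult_nonneg_nonpos)
    qed
  next
    case False
    have lim: "((\<lambda>t. a i \<bullet> (x + t *\<^sub>R d)) \<longlongrightarrow> a i \<bullet> (x + 0 *\<^sub>R d)) (at_right 0)"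
      by (intro tendsto_intros)
    have "a i \<bullet> (x + 0 *\<^sub>R d) < b i" using False x i by force
    then have "\<forall>\<^sub>F t in at_right 0. a i \<bullet> (x + t *\<^sub>R d) < b i"
      by (rule order_tendstoD(2)[OF lim])
    then show ?thesis by (rule eventually_mono) simp
  qed
  then have "\<forall>\<^sub>F t in at_right 0. 0 < t \<and> (\<forall>i\<in>I. a i \<bullet> (x + t *\<^sub>R d) \<le> b i)"
    using eventually_at_right_less by (intro eventually_conj eventually_ball_finite assms(1)) auto
  then show ?thesis using eventually_happens trivial_limit_at_right_real by blast
qed

lemma separating_direction_of_convex_cone_hull:
  fixes s :: "'a::euclidean_space"
  assumes "finite V" "s \<notin> convex_cone hull V"
  shows "\<exists>d. (\<forall>v\<in>V. d \<bullet> v \<ge> 0) \<and> d \<bullet> s < 0"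
proof -
  obtain d \<beta> where d: "d \<bullet> s < \<beta>" "\<forall>v\<in>convex_cone hull V. \<beta> < d \<bullet> v"
    using separating_hyperplane_closed_point[OF convex_convex_cone_hull
        closed_convex_cone_hull[OF assms(1)] assms(2)] by blast
  then have "\<beta> < 0" using convex_cone_hull_contains_0 by force
  have "d \<bullet> v \<ge> 0" if "v \<in> V" for v
  proof (rule ccontr)
    assume "\<not> d \<bullet> v \<ge> 0"
    then have "(\<beta> / (d \<bullet> v)) *\<^sub>R v \<in> convex_cone hull V"
      using \<open>\<beta> < 0\<close> that by (intro convex_cone_hull_mul hull_inc) (auto simp: divide_nonpos_neg)
    moreover have "d \<bullet> ((\<beta> / (d \<bullet> v)) *\<^sub>R v) = \<beta>" using \<open>\<not> d \<bullet> v \<ge> 0\<close> by simp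
    ultimately show False using d(2) by force
  qed
  moreover have "d \<bullet> s < 0" using d(1) \<open>\<beta> < 0\<close> by linarith
  ultimately show ?thesis by blast
qed

lemma convex_cone_hull_range_nonneg_combination:
  fixes v :: "'m::finite \<Rightarrow> 'a::real_vector"
  assumes "q \<in> convex_cone hull (range v)"
  obtains \<mu> where "\<And>l. \<mu> l \<ge> 0" "q = (\<Sum>l\<in>UNIV. \<mu> l *\<^sub>R v l)"
proof -
  let ?N = "{\<Sum>l\<in>UNIV. \<mu> l *\<^sub>R v l | \<mu>. \<forall>l. \<mu> l \<ge> 0}"
  have "range v \<subseteq> ?N"
  proof clarify
    fix l0
    show "\<exists>\<mu>. v l0 = (\<Sum>l\<in>UNIV. \<mu> l *\<^sub>R v l) \<and> (\<forall>l. 0 \<le> \<mu> l)"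
      by (intro exI[of _ "\<lambda>l. if l = l0 then 1 else 0"])
        (simp add: if_distrib[of "\<lambda>c. c *\<^sub>R _"] cong: if_cong)
  qed
  moreover have "convex_cone ?N"
    unfolding convex_cone_iff
  proof (intro conjI ballI allI impI)
    show "0 \<in> ?N" by (intro CollectI exI[of _ "\<lambda>l. 0"]) auto
  next
    fix p q assume "p \<in> ?N" "q \<in> ?N"
    then obtain \<mu> \<nu> where "p = (\<Sum>l\<in>UNIV. \<mu> l *\<^sub>R v l)" "\<forall>l. \<mu> l \<ge> 0"
      "q = (\<Sum>l\<in>UNIV. \<nu> l *\<^sub>R v l)" "\<forall>l. \<nu> l \<ge> 0" by blast
    then show "p + q \<in> ?N"
      by (intro CollectI exI[of _ "\<lambda>l. \<mu> l + \<nu> l"]) (auto simp: scaleR_add_left sum.distrib)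
  next
    fix p and c :: real assume "p \<in> ?N" "0 \<le> c"
    then obtain \<mu> where "p = (\<Sum>l\<in>UNIV. \<mu> l *\<^sub>R v l)" "\<forall>l. \<mu> l \<ge> 0" by blast
    then show "c *\<^sub>R p \<in> ?N"
      using \<open>0 \<le> c\<close> by (intro CollectI exI[of _ "\<lambda>l. c * \<mu> l"]) (auto simp: scaleR_sum_right)
  qed
  ultimately have "convex_cone hull (range v) \<subseteq> ?N" by (rule hull_minimal)
  then show ?thesis using assms that by blast
qed

definition scalarized :: "('m::finite \<Rightarrow> 'a \<Rightarrow> 'a) \<Rightarrow> ('m \<Rightarrow> real) \<Rightarrow> 'a \<Rightarrow> 'a::real_vector" where
  "scalarized F w x = (\<Sum>l\<in>UNIV. w l *\<^sub>R F l x)"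

lemma continuous_on_scalarized:
  fixes F :: "'m::finite \<Rightarrow> 'a::real_normed_vector \<Rightarrow> 'a"
  assumes "\<And>l. continuous_on K (F l)"
  shows "continuous_on K (scalarized F w)"
  unfolding scalarized_def by (intro continuous_intros assms)

lemma monotone_map_on_scalarized:
  fixes F :: "'m::finite \<Rightarrow> 'a::real_inner \<Rightarrow> 'a"
  assumes "\<And>l. monotone_map_on K (F l)" "\<And>l. w l \<ge> 0"
  shows "monotone_map_on K (scalarized F w)"
  unfolding monotone_map_on_def
proof (intro ballI)
  fix x y assume "x \<in> K" "y \<in> K"
  have "(scalarized F w y - scalarized F w x) \<bullet> (y - x) = (\<Sum>l\<in>UNIV. w l * ((F l y - F l x) \<bullet> (y - x)))"
    by (simp add: scalarized_def scaleR_diff_right inner_sum_left inner_diff_left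
        right_diff_distrib flip: sum_subtractf)
  also have "\<dots> \<ge> 0"
    using assms \<open>x \<in> K\<close> \<open>y \<in> K\<close> by (intro sum_nonneg mult_nonneg_nonneg) (auto simp: monotone_map_on_def)
  finally show "(scalarized F w y - scalarized F w x) \<bullet> (y - x) \<ge> 0" .
qed

lemma vi_sol_scalarized_subset_pareto_sol:
  fixes F :: "'m::finite \<Rightarrow> 'a::real_inner \<Rightarrow> 'a"
  assumes w: "\<And>l. w l > 0"
  shows "vi_sol K (scalarized F w) \<subseteq> pareto_sol F K"
proof
  fix x assume x: "x \<in> vi_sol K (scalarized F w)"
  have "\<not> ((\<forall>l. F l x \<bullet> (x - y) \<ge> 0) \<and> (\<exists>l. F l x \<bullet> (x - y) > 0))" if y: "y \<in> K" for y
  proof (intro notI, elim conjE exE)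
    fix l0 assume nonneg: "\<forall>l. F l x \<bullet> (x - y) \<ge> 0" and pos: "F l0 x \<bullet> (x - y) > 0"
    have "0 \<le> w l * (F l x \<bullet> (x - y))" for l
      using w[of l] nonneg by (simp add: zero_le_mult_iff)
    moreover have "0 < w l0 * (F l0 x \<bullet> (x - y))" using w[of l0] pos by simp
    ultimately have "0 < (\<Sum>l\<in>UNIV. w l * (F l x \<bullet> (x - y)))"
      by (intro sum_pos2[of _ l0]) auto
    also have "\<dots> = - (scalarized F w x \<bullet> (y - x))"
      by (simp add: scalarized_def inner_sum_left inner_diff_right right_diff_distrib sum_subtractf)
    finally show False using x y by (auto simp: vi_sol_def)
  qed
  then show "x \<in> pareto_sol F K" using x by (auto simp: vi_sol_def pareto_sol_def)
qed

lemma pareto_sol_polyhedral_cone: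
  fixes F :: "'m::finite \<Rightarrow> 'a::euclidean_space \<Rightarrow> 'a"
  assumes I: "finite I" and K: "K = {z. \<forall>i\<in>I. a i \<bullet> z \<le> b i}" and x: "x \<in> pareto_sol F K"
  shows "(\<Sum>l\<in>UNIV. F l x) \<in> convex_cone hull ((\<lambda>i. - a i) ` {i\<in>I. a i \<bullet> x = b i} \<union> range (\<lambda>l. - F l x))"
  (is "?s \<in> convex_cone hull ?V")
proof (rule ccontr)
  txt \<open>Otherwise a direction feasible for the active constraints decreases every objective,
    one of them strictly.\<close>
  assume "?s \<notin> convex_cone hull ?V"
  moreover have "finite ?V" using I by simp
  ultimately obtain d where d: "\<forall>v\<in>?V. d \<bullet> v \<ge> 0" and d_sum: "d \<bullet> ?s < 0"
    using separating_direction_of_convex_cone_hull by blast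
  have d_active: "a i \<bullet> d \<le> 0" if "i \<in> I" "a i \<bullet> x = b i" for i
  proof -
    have "d \<bullet> - a i \<ge> 0" using d that by blast
    then show ?thesis by (simp add: inner_commute)
  qed
  have d_obj: "F l x \<bullet> d \<le> 0" for l
  proof -
    have "d \<bullet> - F l x \<ge> 0" using d by blast
    then show ?thesis by (simp add: inner_commute)
  qed
  have "x \<in> K" using x by (simp add: pareto_sol_def)
  then have "\<forall>i\<in>I. a i \<bullet> x \<le> b i" using K by simp
  then have "\<exists>t>0. \<forall>i\<in>I. a i \<bullet> (x + t *\<^sub>R d) \<le> b i"
    by (rule polyhedron_feasible_direction[OF I _ d_active])
  then obtain t where t: "t > 0" "\<forall>i\<in>I. a i \<bullet> (x + t *\<^sub>R d) \<le> b i" by blast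
  have yK: "x + t *\<^sub>R d \<in> K" using t(2) K by simp
  have Fy: "F l x \<bullet> (x - (x + t *\<^sub>R d)) = - (t * (F l x \<bullet> d))" for l by simp
  have "\<forall>l. F l x \<bullet> (x - (x + t *\<^sub>R d)) \<ge> 0"
    using d_obj t(1) by (simp add: Fy mult_nonneg_nonpos)
  moreover have "(\<Sum>l\<in>UNIV. F l x \<bullet> d) < 0"
    using d_sum by (simp add: inner_commute[of d] inner_sum_left)
  then obtain l where "F l x \<bullet> d < 0" by (meson not_less sum_nonneg)
  then have "t * (F l x \<bullet> d) < 0" using t(1) by (rule mult_pos_neg[rotated])
  then have "\<exists>l. F l x \<bullet> (x - (x + t *\<^sub>R d)) > 0" by (intro exI[of _ l]) (simp add: Fy)
  ultimately show False using x yK by (auto simp: pareto_sol_def)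
qed

lemma pareto_sol_imp_vi_sol_scalarized:
  fixes F :: "'m::finite \<Rightarrow> 'a::euclidean_space \<Rightarrow> 'a"
  assumes "polyhedron K" and x: "x \<in> pareto_sol F K"
  obtains w where "\<And>l. w l > 0" "x \<in> vi_sol K (scalarized F w)"
proof -
  obtain I and a :: "'a set \<Rightarrow> 'a" and b
    where I: "finite I" and K: "K = {z. \<forall>i\<in>I. a i \<bullet> z \<le> b i}"
    by (rule polyhedron_as_inequalities[OF assms(1)])
  define Act where "Act = {i\<in>I. a i \<bullet> x = b i}"
  obtain g q where g: "g \<in> convex_cone hull ((\<lambda>i. - a i) ` Act)"
    and q: "q \<in> convex_cone hull (range (\<lambda>l. - F l x))" and sum_eq: "(\<Sum>l\<in>UNIV. F l x) = g + q"
    using pareto_sol_polyhedral_cone[OF I K x] unfolding Act_def convex_cone_hull_Un by blast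
  obtain \<mu> where \<mu>: "\<And>l. \<mu> l \<ge> 0" "q = (\<Sum>l\<in>UNIV. \<mu> l *\<^sub>R - F l x)"
    using convex_cone_hull_range_nonneg_combination[OF q] by blast
  define w where "w l = 1 + \<mu> l" for l
  have "scalarized F w x = g"
    using sum_eq \<mu>(2) by (simp add: scalarized_def w_def scaleR_add_left sum.distrib sum_negf)
  moreover have "g \<bullet> (y - x) \<ge> 0" if y: "y \<in> K" for y
  proof -
    have "(y - x) \<bullet> - a i \<ge> 0" if "i \<in> Act" for i
    proof -
      have "a i \<bullet> y \<le> b i" "a i \<bullet> x = b i" using that y K by (auto simp: Act_def)
      then show ?thesis by (simp add: inner_diff_left inner_commute[of y] inner_commute[of x])
    qed
    then have "(\<lambda>i. - a i) ` Act \<subseteq> {v. (y - x) \<bullet> v \<ge> 0}" by blast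
    then have "convex_cone hull ((\<lambda>i. - a i) ` Act) \<subseteq> {v. (y - x) \<bullet> v \<ge> 0}"
      by (intro hull_minimal convex_cone_halfspace_ge)
    then show ?thesis using g by (auto simp: inner_commute)
  qed
  ultimately have "x \<in> vi_sol K (scalarized F w)"
    using x by (simp add: vi_sol_def pareto_sol_def)
  moreover have "\<And>l. w l > 0" using \<mu>(1) by (simp add: w_def add_pos_nonneg)
  ultimately show ?thesis using that by blast
qed

section \<open>Connectedness of the Pareto solution set\<close>

lemma pareto_sol_subset_bounded_component:
  fixes F :: "'m::finite \<Rightarrow> 'a::euclidean_space \<Rightarrow> 'a"
  assumes K: "closed K" "convex K" "polyhedron K"
    and cont: "\<And>l. continuous_on K (F l)" and mono: "\<And>l. monotone_map_on K (F l)"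
    and x0: "x0 \<in> pareto_sol F K"
    and bdd: "bounded (connected_component_set (pareto_sol F K) x0)"
  shows "pareto_sol F K \<subseteq> connected_component_set (pareto_sol F K) x0"
proof
  fix x1 assume x1: "x1 \<in> pareto_sol F K"
  obtain \<xi>0 where \<xi>0: "\<And>l. \<xi>0 l > 0" "x0 \<in> vi_sol K (scalarized F \<xi>0)"
    using pareto_sol_imp_vi_sol_scalarized[OF K(3) x0] by blast
  obtain \<xi>1 where \<xi>1: "\<And>l. \<xi>1 l > 0" "x1 \<in> vi_sol K (scalarized F \<xi>1)"
    using pareto_sol_imp_vi_sol_scalarized[OF K(3) x1] by blast
  define w where "w t l = (1 - t) * \<xi>0 l + t * \<xi>1 l" for t l
  define S where "S t = vi_sol K (scalarized F (w t))" for t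
  have w01: "w 0 = \<xi>0" "w 1 = \<xi>1" by (simp_all add: w_def fun_eq_iff)
  have w_pos: "w t l > 0" if "t \<in> {0..1}" for t l
  proof (cases "t = 0")
    case False
    then have "t * \<xi>1 l > 0" using that \<xi>1(1)[of l] by simp
    moreover have "(1 - t) * \<xi>0 l \<ge> 0" using that \<xi>0(1)[of l] by simp
    ultimately show ?thesis by (simp add: w_def)
  qed (simp add: w_def \<xi>0(1))
  have cont_w: "continuous_on ({0..1} \<times> K) (\<lambda>(t, x). scalarized F (w t) x)"
    unfolding scalarized_def w_def case_prod_beta
    by (intro continuous_intros continuous_on_compose2[OF cont]) auto
  have cont_t: "continuous_on K (scalarized F (w t))" for t
    using cont by (rule continuous_on_scalarized)
  have mono_t: "monotone_map_on K (scalarized F (w t))" if "t \<in> {0..1}" for t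
    using mono w_pos[OF that] by (intro monotone_map_on_scalarized less_imp_le)
  have "S 1 \<subseteq> connected_component_set (pareto_sol F K) x0"
  proof (rule family_subset_bounded_component[OF _ _ _ _ bdd])
    show "S t \<subseteq> pareto_sol F K" if "t \<in> {0..1}" for t
      unfolding S_def using w_pos[OF that] by (rule vi_sol_scalarized_subset_pareto_sol)
    show "connected (S t)" if "t \<in> {0..1}" for t
      unfolding S_def using K(2) cont_t mono_t[OF that]
      by (intro convex_connected convex_vi_sol)
    have "closedin (top_of_set ({0..1} \<times> K)) (Sigma {0..1} S)"
      unfolding S_def by (rule closedin_vi_sol_graph[OF cont_w])
    moreover have "closed ({0..1::real} \<times> K)" using K(1) by (intro closed_Times) auto
    ultimately show "closed (Sigma {0..1} S)" by (rule closedin_closed_trans)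
    show "\<exists>V. openin (top_of_set {0..1}) V \<and> t \<in> V \<and> (\<forall>s\<in>V. S s \<noteq> {} \<and> S s \<subseteq> U)"
      if "t \<in> {0..1}" "S t \<noteq> {}" "bounded (S t)" "open U" "S t \<subseteq> U" for t U
      using vi_sol_upper_hemicontinuous_at[OF K(1,2) cont_w mono_t that[unfolded S_def]]
      unfolding S_def .
    show "x0 \<in> S 0" using \<xi>0(2) by (simp add: S_def w01)
  qed
  moreover have "x1 \<in> S 1" using \<xi>1(2) by (simp add: S_def w01)
  ultimately show "x1 \<in> connected_component_set (pareto_sol F K) x0" by blast
qed

theorem theorem5:
  fixes F :: "'m::finite \<Rightarrow> 'a::euclidean_space \<Rightarrow> 'a"
    and K :: "'a set"
  assumes "K \<noteq> {}" and "closed K" and "convex K"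
    and "polyhedron K"
    and "\<And>l. continuous_on K (F l)"
    and "\<And>l. monotone_map_on K (F l)"
  shows "(\<not> connected (pareto_sol F K) \<longrightarrow>
            (\<forall>x\<in>pareto_sol F K. \<not> bounded (connected_component_set (pareto_sol F K) x)))
       \<and> (bounded (pareto_sol F K) \<and> pareto_sol F K \<noteq> {} \<longrightarrow> connected (pareto_sol F K))"
proof -
  have one_component: "connected (pareto_sol F K)"
    if "x \<in> pareto_sol F K" "bounded (connected_component_set (pareto_sol F K) x)" for x
  proof -
    have "pareto_sol F K = connected_component_set (pareto_sol F K) x"
      using pareto_sol_subset_bounded_component[OF assms(2-6) that] connected_component_subset
      by blast
    then show ?thesis by (metis connected_connected_component)
  qed
  show ?thesis
  proof (intro conjI impI ballI notI)
    show False if "\<not> connected (pareto_sol F K)" "x \<in> pareto_sol F K"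
      "bounded (connected_component_set (pareto_sol F K) x)" for x
      using one_component that by blast
    assume "bounded (pareto_sol F K) \<and> pareto_sol F K \<noteq> {}"
    then obtain x where "x \<in> pareto_sol F K" "bounded (pareto_sol F K)" by blast
    then show "connected (pareto_sol F K)"
      using one_component bounded_subset[OF _ connected_component_subset] by blast
  qed
qed

end
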